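(* Let $\pi_1^E$ be a collision-free path in $G=(L,\bar{E}_{\text{CF}},c)$ from $p_s$ to $p_g$, with cost $c(\pi_1^E)$, given as input to the smoothing algorithm DagSmooth, and let $\pi_2^E$ be the path returned by DagSmooth, with cost $c(\pi_2^E)$. Then $c(\pi_2^E)\leq c(\pi_1^E)$. Moreover, if $n=0$, DagSmooth runs in time quadratic in the number of vertices along $\pi_1^E$.
   Context: Setting: $L\subseteq\mathcal{X}$ is a lattice of configurations; for any configurations $i,j$ there is an optimal (cost-minimizing, kinodynamically feasible, obstacle-free) motion from $i$ to $j$ with cost $c\geq 0$; these optimal motions between lattice vertices are pre-computed and can be retrieved in constant time. $G=(L,\bar{E}_{\text{CF}},c)$ is a weighted directed graph whose edges $(i,j)$ correspond to collision-free optimal motions from $i$ to $j$ (with respect to obstacles $\mathcal{X}_{\text{obs}}$) with weight equal to their cost. A path $\pi_1^E=\{(i_r,i_{r+1}):r=1,\dots,m-1\}$ in $G$ with $i_1=p_s$, $i_m=p_g$ has cost the sum of edge costs; $C_\pi$ is the set of all configurations along the motions from $i_r$ to $i_{r+1}$. A function $\Psi:\mathbb{R}\to\mathbb{R}$ gives the cost $\Psi(c(p))$ of traversing a motion $p$ backwards. DagSmooth$(\pi_1^E,C_\pi,\mathcal{X}_{\text{obs}},c,n,\Psi)$, with $n\in\mathbb{N}_{\geq0}$: sample $n$ random configurations from $C_\pi$; let $V$ consist of $i_1,\dots,i_m$ together with these samples, listed as $i_1,\dots,i_{m+n}$ in the order they appear along $C_\pi$. Set $\text{dist}(i)=\infty$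 for all $i\in V$, $\text{dist}(i_1)=0$. For $u=1,\dots,m+n-1$ and $v=u+1,\dots,m+n$: let $p_1$ be the optimal motion from $i_u$ to $i_v$ and $p_2$ the optimal motion from $i_v$ to $i_u$ (to be traversed backwards); let $\underline{c},\underline{p}$ be the smaller of $c(p_1),\Psi(c(p_2))$ and the corresponding motion, and $\overline{c},\overline{p}$ the larger and its motion. If $\text{dist}(i_u)+\underline{c}\leq\text{dist}(i_v)$: if $\underline{p}$ is collision-free, set $\text{dist}(i_v)=\text{dist}(i_u)+\underline{c}$ and $\text{Pred}(i_v)=i_u$; otherwise, if $\text{dist}(i_u)+\overline{c}\leq\text{dist}(i_v)$ and $\overline{p}$ is collision-free, set $\text{dist}(i_v)=\text{dist}(i_u)+\overline{c}$ and $\text{Pred}(i_v)=i_u$. Return the path obtained by following the chain of predecessors backwards from the goal $p_g$; its cost is the sum of the chosen costs along it. Running time counts each motion retrieval, cost evaluation and collision check as one operation. *)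

theory Defs
  imports Complex_Main "HOL-Library.Extended_Real"
begin

text \<open>Configurations have type 'x, motions type 'm.
  mot i j is the (pre-computed) optimal motion from i to j; traj p t, t in [0,1],
  is the configuration at parameter t along motion p; c is the cost of a motion;
  Psi gives the cost of traversing a motion backwards.\<close>

definition coll_free :: "('m \<Rightarrow> real \<Rightarrow> 'x) \<Rightarrow> 'x set \<Rightarrow> 'm \<Rightarrow> bool" where
  "coll_free traj Xobs p \<longleftrightarrow> (\<forall>t\<in>{0..1}. traj p t \<notin> Xobs)"

definition is_cf_path ::
  "'x set \<Rightarrow> ('x \<Rightarrow> 'x \<Rightarrow> 'm) \<Rightarrow> ('m \<Rightarrow> bool) \<Rightarrow> 'x \<Rightarrow> 'x \<Rightarrow> 'x list \<Rightarrow> bool" where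
  "is_cf_path L mot cf ps pg pv \<longleftrightarrow>
     pv \<noteq> [] \<and> hd pv = ps \<and> last pv = pg \<and> set pv \<subseteq> L \<and>
     (\<forall>r. Suc r < length pv \<longrightarrow> cf (mot (pv ! r) (pv ! Suc r)))"

definition path_cost :: "('x \<Rightarrow> 'x \<Rightarrow> 'm) \<Rightarrow> ('m \<Rightarrow> real) \<Rightarrow> 'x list \<Rightarrow> real" where
  "path_cost mot c pv = (\<Sum>r<length pv - 1. c (mot (pv ! r) (pv ! Suc r)))"

text \<open>V is the list of the path vertices together with n configurations sampled from
  C_pi, listed in the order in which they appear along C_pi: idx r is the position of
  i_(r+1) in V, and a sample between positions idx r and idx (r+1) lies on the motion
  from i_(r+1) to i_(r+2) at parameter ts k, parameters nondecreasing.\<close>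
definition dag_vertices ::
  "('m \<Rightarrow> real \<Rightarrow> 'x) \<Rightarrow> ('x \<Rightarrow> 'x \<Rightarrow> 'm) \<Rightarrow> 'x list \<Rightarrow> nat \<Rightarrow> 'x list \<Rightarrow> bool" where
  "dag_vertices traj mot pv n V \<longleftrightarrow>
     length V = length pv + n \<and>
     (\<exists>(idx :: nat \<Rightarrow> nat) (ts :: nat \<Rightarrow> real).
        strict_mono_on {..<length pv} idx \<and> idx 0 = 0 \<and> idx (length pv - 1) = length V - 1 \<and>
        (\<forall>r < length pv. V ! idx r = pv ! r) \<and>
        (\<forall>r. Suc r < length pv \<longrightarrow>
            (\<forall>k. idx r < k \<and> k < idx (Suc r) \<longrightarrow>
                 ts k \<in> {0..1} \<and> V ! k = traj (mot (pv ! r) (pv ! Suc r)) (ts k)) \<and>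
            mono_on {idx r<..<idx (Suc r)} ts))"

text \<open>Algorithm state: dist, Pred, chosen cost of the edge into each vertex, operation count.
  Vertices are referred to by their position in V.\<close>
type_synonym dag_state = "(nat \<Rightarrow> ereal) \<times> (nat \<Rightarrow> nat) \<times> (nat \<Rightarrow> real) \<times> nat"

text \<open>One iteration (u,v).  Operations counted: 2 motion retrievals, 2 cost evaluations,
  and each collision check actually performed.  Ties c(p1) = Psi(c(p2)) choose p1 as the
  smaller one.\<close>
definition relax_step ::
  "('x \<Rightarrow> 'x \<Rightarrow> 'm) \<Rightarrow> ('m \<Rightarrow> real) \<Rightarrow> ('m \<Rightarrow> bool) \<Rightarrow> (real \<Rightarrow> real) \<Rightarrow> 'x list \<Rightarrow>
   nat \<Rightarrow> nat \<Rightarrow> dag_state \<Rightarrow> dag_state" where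
  "relax_step mot c cf Psi V u v st = (case st of (dst, pred, cst, ops) \<Rightarrow>
     let p1 = mot (V ! u) (V ! v); p2 = mot (V ! v) (V ! u);
         c1 = c p1; c2 = Psi (c p2);
         lc = (if c1 \<le> c2 then c1 else c2); lp = (if c1 \<le> c2 then p1 else p2);
         oc = (if c1 \<le> c2 then c2 else c1); op = (if c1 \<le> c2 then p2 else p1);
         ops' = ops + 4
     in if dst u + ereal lc \<le> dst v then
          (if cf lp then (dst(v := dst u + ereal lc), pred(v := u), cst(v := lc), ops' + 1)
           else if dst u + ereal oc \<le> dst v then
             (if cf op then (dst(v := dst u + ereal oc), pred(v := u), cst(v := oc), ops' + 2)
              else (dst, pred, cst, ops' + 2))
           else (dst, pred, cst, ops' + 1))
        else (dst, pred, cst, ops'))"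

definition dag_init :: dag_state where
  "dag_init = ((\<lambda>_. \<infinity>)(0 := 0), id, (\<lambda>_. 0), 0)"

definition dag_loop ::
  "('x \<Rightarrow> 'x \<Rightarrow> 'm) \<Rightarrow> ('m \<Rightarrow> real) \<Rightarrow> ('m \<Rightarrow> bool) \<Rightarrow> (real \<Rightarrow> real) \<Rightarrow> 'x list \<Rightarrow> dag_state" where
  "dag_loop mot c cf Psi V =
     foldl (\<lambda>st (u, v). relax_step mot c cf Psi V u v st) dag_init
       [(u, v). u \<leftarrow> [0..<length V - 1], v \<leftarrow> [Suc u..<length V]]"

text \<open>Follow the chain of predecessors backwards (Pred v < v for every updated v).\<close>
fun back_chain :: "(nat \<Rightarrow> nat) \<Rightarrow> nat \<Rightarrow> nat list" where
  "back_chain pr v = (if pr v < v then back_chain pr (pr v) @ [v] else [v])"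

definition dagsmooth ::
  "('x \<Rightarrow> 'x \<Rightarrow> 'm) \<Rightarrow> ('m \<Rightarrow> real) \<Rightarrow> ('m \<Rightarrow> bool) \<Rightarrow> (real \<Rightarrow> real) \<Rightarrow> 'x list \<Rightarrow>
   'x list \<times> real \<times> nat" where
  "dagsmooth mot c cf Psi V = (case dag_loop mot c cf Psi V of (dst, pred, cst, ops) \<Rightarrow>
     let is = back_chain pred (length V - 1)
     in (map (\<lambda>i. V ! i) is, sum_list (map cst (tl is)), ops))"

end

theory Submission
  imports Defs
begin

text \<open>The vertices of V are listed in path order and every pair (u, v) with u < v is relaxed,
  sources in nondecreasing order: this is shortest-path relaxation of a DAG in topological
  order. When the pair (u, v) is processed, dist u is already final, because every later pair
  has a source at least u and hence a target above u. Each edge of the input path joins two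
  vertices of V and its forward motion is collision-free, so relaxing it gives
  dist v \<le> dist u + c (forward motion); chaining these along the path bounds the distance
  of the goal by the cost of the input path. The cost of the returned path is exactly that
  distance, since the predecessor of a vertex is always a vertex whose distance is final.
  Every iteration performs at most six operations and there are fewer than |V|^2 of them.\<close>

definition dag_edges :: "nat \<Rightarrow> (nat \<times> nat) list" where
  "dag_edges N = [(u, v). u \<leftarrow> [0..<N - 1], v \<leftarrow> [Suc u..<N]]"

lemma mem_dag_edges_iff: "(u, v) \<in> set (dag_edges N) \<longleftrightarrow> u < v \<and> v < N"
  by (force simp: dag_edges_def)

lemma sorted_dag_edges: "sorted (map fst (dag_edges N))"
proof -
  have "sorted (map fst (concat (map (\<lambda>u. map (Pair u) [Suc u..<N]) [0..<m])))" for m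
    by (induction m) (auto simp: sorted_append o_def map_replicate_const)
  then show ?thesis unfolding dag_edges_def by simp
qed

lemma length_dag_edges_le: "length (dag_edges N) \<le> N\<^sup>2"
proof -
  have "length (concat (map (\<lambda>u. map (Pair u) [Suc u..<N]) [0..<m])) \<le> m * N" for m
    by (induction m) auto
  from this[of "N - 1"] show ?thesis
    unfolding dag_edges_def power2_eq_square by (meson diff_le_self dual_order.trans mult_le_mono1)
qed

lemma length_dag_vertices: "dag_vertices traj mot pv n V \<Longrightarrow> length V = length pv + n"
  by (simp add: dag_vertices_def)

lemma dag_vertices_path_embedding:
  assumes vertices: "dag_vertices traj mot pv n V" and "pv \<noteq> []"
  obtains idx where "idx 0 = 0" and "idx (length pv - 1) = length V - 1"
    and "\<forall>r < length pv. V ! idx r = pv ! r"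
    and "\<forall>r. Suc r < length pv \<longrightarrow> (idx r, idx (Suc r)) \<in> set (dag_edges (length V))"
proof -
  obtain idx :: "nat \<Rightarrow> nat" where mono: "strict_mono_on {..<length pv} idx"
    and idx0: "idx 0 = 0" and idx_last: "idx (length pv - 1) = length V - 1"
    and V_idx: "\<forall>r < length pv. V ! idx r = pv ! r"
    using vertices unfolding dag_vertices_def by blast
  have "length V > 0"
    using length_dag_vertices[OF vertices] \<open>pv \<noteq> []\<close> by simp
  have "(idx r, idx (Suc r)) \<in> set (dag_edges (length V))" if "Suc r < length pv" for r
  proof -
    have "idx (Suc r) \<le> idx (length pv - 1)"
      using that by (intro strict_mono_on_leD[OF mono]) auto
    then show ?thesis
      using strict_mono_onD[OF mono, of r "Suc r"] idx_last \<open>length V > 0\<close> that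
      by (auto simp: mem_dag_edges_iff)
  qed
  with idx0 idx_last V_idx show thesis
    by (blast intro: that)
qed

text \<open>The bound b on predecessors is the largest source relaxed so far: later relaxations only
  change distances of vertices above b, so the identity for dst v stays valid.\<close>

definition pred_invariant :: "nat \<Rightarrow> dag_state \<Rightarrow> bool" where
  "pred_invariant b st \<longleftrightarrow> (case st of (dst, pred, cst, _) \<Rightarrow>
     (\<forall>v. v \<noteq> 0 \<and> dst v \<noteq> \<infinity> \<longrightarrow> pred v < v) \<and>
     (\<forall>v. pred v < v \<longrightarrow> pred v \<le> b \<and> dst v = dst (pred v) + ereal (cst v)))"

lemma pred_invariant_dag_init: "pred_invariant 0 dag_init"
  by (simp add: pred_invariant_def dag_init_def)

declare back_chain.simps [simp del]

lemma back_chain_ne: "back_chain pr v \<noteq> []"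
  by (subst back_chain.simps) simp

lemma back_chain_cost:
  assumes "pred_invariant b (dst, pred, cst, ops)" and "dst 0 = 0"
  shows "dst v \<noteq> \<infinity> \<Longrightarrow> ereal (sum_list (map cst (tl (back_chain pred v)))) = dst v"
proof (induction v rule: less_induct)
  case (less v)
  have reach: "\<forall>w. w \<noteq> 0 \<and> dst w \<noteq> \<infinity> \<longrightarrow> pred w < w"
    and chain: "\<forall>w. pred w < w \<longrightarrow> dst w = dst (pred w) + ereal (cst w)"
    using assms(1) unfolding pred_invariant_def by auto
  show ?case
  proof (cases "pred v < v")
    case True
    have "dst v = dst (pred v) + ereal (cst v)"
      using chain True by blast
    moreover from this have "ereal (sum_list (map cst (tl (back_chain pred (pred v))))) = dst (pred v)"
      using less True by (intro less.IH) auto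
    moreover have "tl (back_chain pred v) = tl (back_chain pred (pred v)) @ [v]"
      using True back_chain_ne[of pred "pred v"]
      by (subst back_chain.simps) (simp add: tl_append split: list.split)
    ultimately show ?thesis
      by (simp flip: plus_ereal.simps(1))
  next
    case False
    then have "v = 0"
      using reach less.prems by blast
    with False show ?thesis
      using assms(2) by (subst back_chain.simps) (simp add: zero_ereal_def)
  qed
qed

context
  fixes mot :: "'x \<Rightarrow> 'x \<Rightarrow> 'm" and c :: "'m \<Rightarrow> real" and cf :: "'m \<Rightarrow> bool"
    and Psi :: "real \<Rightarrow> real" and V :: "'x list"
begin

lemma relax_step_cases:
  assumes "relax_step mot c cf Psi V u v (dst, pred, cst, ops) = (dst', pred', cst', ops')"
  obtains "dst' = dst" "pred' = pred" "cst' = cst"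
  | x where "dst' = dst(v := dst u + ereal x)" "pred' = pred(v := u)" "cst' = cst(v := x)"
      "dst u + ereal x \<le> dst v"
  using assms unfolding relax_step_def Let_def by (auto split: if_splits)

lemma relax_step_ops_le:
  "snd (snd (snd (relax_step mot c cf Psi V u v st))) \<le> snd (snd (snd st)) + 6"
  by (auto simp: relax_step_def Let_def split: prod.split)

lemma relax_step_dist_le: "fst (relax_step mot c cf Psi V u v st) w \<le> fst st w"
  by (cases st; cases "relax_step mot c cf Psi V u v st")
    (auto elim!: relax_step_cases)

lemma relax_step_dist_other:
  "w \<noteq> v \<Longrightarrow> fst (relax_step mot c cf Psi V u v st) w = fst st w"
  by (cases st; cases "relax_step mot c cf Psi V u v st")
    (auto elim!: relax_step_cases)

lemma relax_step_collision_free_edge: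
  assumes "cf (mot (V ! u) (V ! v))"
  shows "fst (relax_step mot c cf Psi V u v st) v \<le> fst st u + ereal (c (mot (V ! u) (V ! v)))"
proof -
  have mono: "a + ereal x \<le> a + ereal y" if "x \<le> y" for a :: ereal and x y
    using that by (intro add_left_mono) simp
  show ?thesis
    using assms mono[of "Psi (c (mot (V ! v) (V ! u)))" "c (mot (V ! u) (V ! v))" "fst st u"]
    by (auto simp: relax_step_def Let_def not_le split: prod.split)
qed

definition relax_fold :: "dag_state \<Rightarrow> (nat \<times> nat) list \<Rightarrow> dag_state" where
  "relax_fold st es = foldl (\<lambda>st (u, v). relax_step mot c cf Psi V u v st) st es"

lemma relax_fold_Nil [simp]: "relax_fold st [] = st"
  by (simp add: relax_fold_def)

lemma relax_fold_Cons [simp]: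
  "relax_fold st ((u, v) # es) = relax_fold (relax_step mot c cf Psi V u v st) es"
  by (simp add: relax_fold_def)

lemma relax_fold_append: "relax_fold st (es @ es') = relax_fold (relax_fold st es) es'"
  by (simp add: relax_fold_def)

lemma dag_loop_eq_relax_fold: "dag_loop mot c cf Psi V = relax_fold dag_init (dag_edges (length V))"
  by (simp add: dag_loop_def relax_fold_def dag_edges_def)

lemma relax_fold_ops_le:
  "snd (snd (snd (relax_fold st es))) \<le> snd (snd (snd st)) + 6 * length es"
proof (induction es arbitrary: st)
  case (Cons e es)
  obtain u v where "e = (u, v)" by fastforce
  then show ?case
    using Cons.IH[of "relax_step mot c cf Psi V u v st"] relax_step_ops_le[of u v st] by simp
qed simp

lemma relax_fold_dist_le: "fst (relax_fold st es) w \<le> fst st w"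
proof (induction es arbitrary: st)
  case (Cons e es)
  obtain u v where "e = (u, v)" by fastforce
  then show ?case
    using Cons.IH[of "relax_step mot c cf Psi V u v st"] relax_step_dist_le[of u v st w] by simp
qed simp

lemma relax_fold_dist_untargeted:
  "w \<notin> snd ` set es \<Longrightarrow> fst (relax_fold st es) w = fst st w"
proof (induction es arbitrary: st)
  case (Cons e es)
  obtain u v where "e = (u, v)" by fastforce
  then show ?case
    using Cons.prems Cons.IH[of "relax_step mot c cf Psi V u v st"] relax_step_dist_other[of w v u st]
    by simp
qed simp

lemma relax_fold_edge_bound:
  assumes "(a, b) \<in> set es" and "sorted (map fst es)" and "\<forall>(u, v)\<in>set es. u < v"
    and "cf (mot (V ! a) (V ! b))"
  shows "fst (relax_fold st es) b \<le> fst (relax_fold st es) a + ereal (c (mot (V ! a) (V ! b)))"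
proof -
  obtain A B where es: "es = A @ (a, b) # B"
    using assms(1) by (meson in_set_conv_decomp)
  define S where "S = relax_step mot c cf Psi V a b (relax_fold st A)"
  have final: "relax_fold st es = relax_fold S B"
    unfolding es S_def by (simp add: relax_fold_append)
  have "a < snd e" if "e \<in> set B" for e
  proof -
    have "a \<le> fst e"
      using assms(2) that unfolding es by (auto simp: sorted_append)
    moreover have "fst e < snd e"
      using assms(3) that unfolding es by (simp add: case_prod_beta)
    ultimately show ?thesis by simp
  qed
  then have "a \<notin> snd ` set B"
    by (auto simp: image_iff)
  have "a \<noteq> b"
    using assms(1,3) by fastforce
  have dist_a: "fst (relax_fold st es) a = fst (relax_fold st A) a"
  proof -
    have "fst (relax_fold st es) a = fst S a"
      unfolding final by (rule relax_fold_dist_untargeted) fact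
    also have "\<dots> = fst (relax_fold st A) a"
      unfolding S_def using \<open>a \<noteq> b\<close> by (rule relax_step_dist_other)
    finally show ?thesis .
  qed
  have "fst (relax_fold st es) b \<le> fst S b"
    unfolding final by (rule relax_fold_dist_le)
  also have "\<dots> \<le> fst (relax_fold st A) a + ereal (c (mot (V ! a) (V ! b)))"
    unfolding S_def using assms(4) by (rule relax_step_collision_free_edge)
  finally show ?thesis
    unfolding dist_a .
qed

lemma relax_fold_dist_along_chain:
  fixes i :: "nat \<Rightarrow> nat"
  assumes "sorted (map fst es)" and "\<forall>(u, v)\<in>set es. u < v"
    and "\<forall>k<r. (i k, i (Suc k)) \<in> set es \<and> cf (mot (V ! i k) (V ! i (Suc k)))"
  shows "fst (relax_fold st es) (i r)
    \<le> fst (relax_fold st es) (i 0) + ereal (\<Sum>k<r. c (mot (V ! i k) (V ! i (Suc k))))"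
  using assms(3)
proof (induction r)
  case (Suc r)
  let ?dst = "fst (relax_fold st es)" and ?c = "\<lambda>k. c (mot (V ! i k) (V ! i (Suc k)))"
  have "?dst (i (Suc r)) \<le> ?dst (i r) + ereal (?c r)"
    using Suc.prems assms(1,2) by (intro relax_fold_edge_bound) auto
  also have "\<dots> \<le> ?dst (i 0) + ereal (\<Sum>k<r. ?c k) + ereal (?c r)"
    using Suc by (intro add_right_mono) simp
  finally show ?case
    by (simp add: add.assoc)
qed (simp add: zero_ereal_def)

lemma pred_invariant_relax_step:
  assumes inv: "pred_invariant b st" and "b \<le> u" and "u < v"
  shows "pred_invariant u (relax_step mot c cf Psi V u v st)"
proof -
  obtain dst pred cst ops where st: "st = (dst, pred, cst, ops)"
    by (cases st) auto
  obtain dst' pred' cst' ops' where step: "relax_step mot c cf Psi V u v st = (dst', pred', cst', ops')"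
    by (cases "relax_step mot c cf Psi V u v st") auto
  have reach: "\<forall>w. w \<noteq> 0 \<and> dst w \<noteq> \<infinity> \<longrightarrow> pred w < w"
    and chain: "\<forall>w. pred w < w \<longrightarrow> pred w \<le> b \<and> dst w = dst (pred w) + ereal (cst w)"
    using inv unfolding st pred_invariant_def by auto
  have pred_ne_v: "pred w \<noteq> v" if "pred w < w" for w
    using chain that assms(2,3) by fastforce
  from step[unfolded st] show ?thesis
    unfolding step pred_invariant_def
    by (cases rule: relax_step_cases) (use reach chain pred_ne_v assms(2,3) in auto)
qed

lemma pred_invariant_relax_fold:
  assumes "pred_invariant b st" and "sorted (map fst es)" and "\<forall>(u, v)\<in>set es. b \<le> u \<and> u < v"
  shows "\<exists>b'. pred_invariant b' (relax_fold st es)"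
  using assms
proof (induction es arbitrary: b st)
  case (Cons e es)
  obtain u v where e: "e = (u, v)" by fastforce
  have "pred_invariant u (relax_step mot c cf Psi V u v st)"
    using Cons.prems e by (intro pred_invariant_relax_step) auto
  moreover have "sorted (map fst es)" and "\<forall>(u', v')\<in>set es. u \<le> u' \<and> u' < v'"
    using Cons.prems e by (auto simp: case_prod_beta)
  ultimately show ?case
    unfolding e by (simp add: Cons.IH)
qed auto

lemma dagsmooth_ops_le: "snd (snd (dagsmooth mot c cf Psi V)) \<le> 6 * (length V)\<^sup>2"
proof -
  have "snd (snd (dagsmooth mot c cf Psi V)) = snd (snd (snd (dag_loop mot c cf Psi V)))"
    by (simp add: dagsmooth_def Let_def split: prod.split)
  also have "\<dots> \<le> 6 * length (dag_edges (length V))"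
    using relax_fold_ops_le[of dag_init "dag_edges (length V)"]
    by (simp add: dag_loop_eq_relax_fold dag_init_def)
  also have "\<dots> \<le> 6 * (length V)\<^sup>2"
    using length_dag_edges_le by simp
  finally show ?thesis .
qed

lemma relax_fold_dag_edges_dist_source: "fst (relax_fold dag_init (dag_edges N)) 0 = 0"
proof -
  have "0 \<notin> snd ` set (dag_edges N)"
    by (auto simp: mem_dag_edges_iff)
  then show ?thesis
    by (simp add: relax_fold_dist_untargeted dag_init_def)
qed

lemma dagsmooth_cost_eq_goal_dist:
  assumes loop: "relax_fold dag_init (dag_edges (length V)) = (dst, pred, cst, ops)"
    and "dst (length V - 1) \<noteq> \<infinity>"
  shows "ereal (fst (snd (dagsmooth mot c cf Psi V))) = dst (length V - 1)"
proof -
  have sorted: "sorted (map fst (dag_edges (length V)))"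
    and edges: "\<forall>(u, v)\<in>set (dag_edges (length V)). 0 \<le> u \<and> u < v"
    by (auto simp: sorted_dag_edges mem_dag_edges_iff)
  obtain b where inv: "pred_invariant b (dst, pred, cst, ops)"
    using pred_invariant_relax_fold[OF pred_invariant_dag_init sorted edges] loop by auto
  have "dst 0 = 0"
    using relax_fold_dag_edges_dist_source[of "length V"] loop by simp
  then have "ereal (sum_list (map cst (tl (back_chain pred (length V - 1))))) = dst (length V - 1)"
    using inv assms(2) by (intro back_chain_cost)
  then show ?thesis
    using loop by (simp add: dagsmooth_def dag_loop_eq_relax_fold Let_def)
qed

lemma dagsmooth_cost_le_path_cost:
  assumes path: "is_cf_path L mot cf ps pg pv" and vertices: "dag_vertices traj mot pv n V"
  shows "fst (snd (dagsmooth mot c cf Psi V)) \<le> path_cost mot c pv"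
proof -
  define es where "es = dag_edges (length V)"
  obtain dst pred cst ops where loop: "relax_fold dag_init es = (dst, pred, cst, ops)"
    by (cases "relax_fold dag_init es") auto
  have sorted: "sorted (map fst es)" and edges: "\<forall>(u, v)\<in>set es. u < v"
    unfolding es_def by (auto simp: sorted_dag_edges mem_dag_edges_iff)
  have "pv \<noteq> []" and cf_path: "\<forall>r. Suc r < length pv \<longrightarrow> cf (mot (pv ! r) (pv ! Suc r))"
    using path unfolding is_cf_path_def by auto
  obtain idx where idx0: "idx 0 = 0" and idx_last: "idx (length pv - 1) = length V - 1"
    and V_idx: "\<forall>r < length pv. V ! idx r = pv ! r"
    and path_edges: "\<forall>r. Suc r < length pv \<longrightarrow> (idx r, idx (Suc r)) \<in> set es"
    unfolding es_def using vertices \<open>pv \<noteq> []\<close> by (rule dag_vertices_path_embedding)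
  have "\<forall>k<length pv - 1. (idx k, idx (Suc k)) \<in> set es \<and> cf (mot (V ! idx k) (V ! idx (Suc k)))"
    using path_edges cf_path V_idx by auto
  from relax_fold_dist_along_chain[OF sorted edges this, of dag_init]
  have goal_dist: "dst (length V - 1) \<le> ereal (path_cost mot c pv)"
    using loop idx0 idx_last V_idx relax_fold_dag_edges_dist_source[of "length V"]
    unfolding path_cost_def es_def by simp
  then have "ereal (fst (snd (dagsmooth mot c cf Psi V))) = dst (length V - 1)"
    using loop unfolding es_def by (intro dagsmooth_cost_eq_goal_dist) auto
  with goal_dist show ?thesis
    by (metis ereal_less_eq(3))
qed

end

theorem theorem2:
  fixes L Xobs :: "'x set" and mot :: "'x \<Rightarrow> 'x \<Rightarrow> 'm" and traj :: "'m \<Rightarrow> real \<Rightarrow> 'x"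
    and c :: "'m \<Rightarrow> real" and Psi :: "real \<Rightarrow> real" and pv V :: "'x list"
    and ps pg :: 'x and n :: nat
  assumes "\<forall>i j. traj (mot i j) 0 = i \<and> traj (mot i j) 1 = j"
    and "\<forall>p. c p \<ge> 0"
    and "is_cf_path L mot (coll_free traj Xobs) ps pg pv"
    and "dag_vertices traj mot pv n V"
  shows "fst (snd (dagsmooth mot c (coll_free traj Xobs) Psi V)) \<le> path_cost mot c pv \<and>
    (\<exists>C::nat. \<forall>(L' :: 'x set) (Xobs' :: 'x set) (mot' :: 'x \<Rightarrow> 'x \<Rightarrow> 'm) (traj' :: 'm \<Rightarrow> real \<Rightarrow> 'x)
        (c' :: 'm \<Rightarrow> real) (Psi' :: real \<Rightarrow> real) (pv' :: 'x list) (V' :: 'x list) (ps' :: 'x) (pg' :: 'x).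
       (\<forall>i j. traj' (mot' i j) 0 = i \<and> traj' (mot' i j) 1 = j) \<and> (\<forall>p. c' p \<ge> 0) \<and>
       is_cf_path L' mot' (coll_free traj' Xobs') ps' pg' pv' \<and>
       dag_vertices traj' mot' pv' 0 V' \<longrightarrow>
       snd (snd (dagsmooth mot' c' (coll_free traj' Xobs') Psi' V')) \<le> C * (length pv')\<^sup>2)"
proof (intro conjI exI[of _ 6] allI impI)
  show "fst (snd (dagsmooth mot c (coll_free traj Xobs) Psi V)) \<le> path_cost mot c pv"
    using assms(3,4) by (rule dagsmooth_cost_le_path_cost)
qed (metis add_0_right dagsmooth_ops_le length_dag_vertices)

end
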